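(* Let $\mathcal D=(\mathsf D_1,\dots,\mathsf D_m)$ be a family of even cycles that contains no rainbow even cycle, and suppose $\mathcal D$ contains a rainbow $5$-cycle $\widetilde{\mathsf C}=\{\mathsf e_i=(v_iv_{i+1},\alpha_i): i=1,\dots,5\}$ (indices of $v$ and $\alpha$ taken modulo $5$, so $v_6=v_1$). Then there exist a shift $j\in\{0,1,2,3,4\}$, a vertex $v^*\notin\{v_1,\dots,v_5\}$ and an index $k\in\{1,\dots,5\}$ such that all five edges $(v_iv_{i+1},\alpha_{i+j})$, $i=1,\dots,5$, belong to $\mathcal D$, and at least one of the edges $(v^*v_k,\alpha_{k+j-1})$, $(v^*v_k,\alpha_{k+j})$ belongs to $\mathcal D$.
   Context: A (colored) graph is a finite set $\mathsf G$ of pairs $(e,\alpha)$, where the $e$'s are pairwise distinct 2-element subsets $\{u,v\}$ (written $uv$) of a vertex set and $\alpha$ is a color (colors may repeat). $\chi(\mathsf G)$ is its set of colors; $\mathsf G$ is rainbow if $|\chi(\mathsf G)|=|\mathsf G|$. A cycle is a colored graph whose underlying uncolored edges form a cycle; a $k$-cycle has $k$ edges; even cycles have even length. A family of cycles is a list $\mathcal D=(\mathsf D_1,\dots,\mathsf D_m)$ of cycles on a common vertex set, where all edges of $\mathsf D_i$ receive one color and different $\mathsf D_i$ receive different colors (underlying uncolored cycles may coincide). An edge $(uv,\alpha)$ belongs to $\mathcal D$ if it belongs to some $\mathsf D_i$ (necessarily the one of color $\alpha$). $\mathcal D$ contains a graph $\mathsf G$ if $\mathsf G\subseteq\bigcup_i\mathsf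 D_i$; a rainbow even cycle in $\mathcal D$ is a contained graph that is a rainbow even cycle. *)

theory Defs
  imports Main
begin

text \<open>Uncolored edges are 2-element vertex sets; a colored edge is a pair (edge, color).\<close>

definition is_cycle :: "'v set set \<Rightarrow> bool" where
  "is_cycle E \<longleftrightarrow> (\<exists>vs. length vs \<ge> 3 \<and> distinct vs \<and>
     E = {{vs ! i, vs ! ((i + 1) mod length vs)} | i. i < length vs})"

definition even_cycle :: "'v set set \<Rightarrow> bool" where
  "even_cycle E \<longleftrightarrow> is_cycle E \<and> even (card E)"

definition colored_graph :: "('v set \<times> 'c) set \<Rightarrow> bool" where
  "colored_graph G \<longleftrightarrow> finite G \<and> inj_on fst G \<and> (\<forall>(e, a) \<in> G. card e = 2)"

definition rainbow :: "('v set \<times> 'c) set \<Rightarrow> bool" where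
  "rainbow G \<longleftrightarrow> card (snd ` G) = card G"

text \<open>A family of cycles: list of (uncolored cycle, color), colors pairwise distinct;
  all edges of the i-th cycle receive the i-th color.\<close>
definition family_of_cycles :: "('v set set \<times> 'c) list \<Rightarrow> bool" where
  "family_of_cycles D \<longleftrightarrow> distinct (map snd D) \<and> (\<forall>(E, a) \<in> set D. is_cycle E)"

definition family_of_even_cycles :: "('v set set \<times> 'c) list \<Rightarrow> bool" where
  "family_of_even_cycles D \<longleftrightarrow> family_of_cycles D \<and> (\<forall>(E, a) \<in> set D. even_cycle E)"

definition family_edges :: "('v set set \<times> 'c) list \<Rightarrow> ('v set \<times> 'c) set" where
  "family_edges D = {(e, a). \<exists>E. (E, a) \<in> set D \<and> e \<in> E}"

definition family_contains :: "('v set set \<times> 'c) list \<Rightarrow> ('v set \<times> 'c) set \<Rightarrow> bool" where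
  "family_contains D G \<longleftrightarrow> G \<subseteq> family_edges D"

definition has_rainbow_even_cycle :: "('v set set \<times> 'c) list \<Rightarrow> bool" where
  "has_rainbow_even_cycle D \<longleftrightarrow> (\<exists>G. colored_graph G \<and> family_contains D G \<and>
      even_cycle (fst ` G) \<and> rainbow G)"

end

theory Submission
  imports Defs
begin

(* Each colour class of the family is one even cycle: in every colour each vertex has degree
   0 or 2, no colour contains an odd cycle, and no rainbow 4-cycle exists. Suppose that for every
   admissible shift j all edges of colours \<alpha>_(k+j-1), \<alpha>_(k+j) at v_k stay inside the pentagon.
   For j = 0 this leaves two candidates for the second neighbour of v_i and of v_(i+1) in colour
   \<alpha>_i; excluding rainbow 4-cycles, the only consistent choice makes the shifts j = 1 and
   j = 4 admissible as well. Applied to these two shifts, the hypothesis forces colour \<alpha>_1 to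
   close either a rainbow 4-cycle or a monochromatic 5-cycle. *)

definition cycle_edges :: "'v list \<Rightarrow> 'v set set" where
  "cycle_edges vs = (\<lambda>i. {vs ! i, vs ! (Suc i mod length vs)}) ` {..<length vs}"

lemma is_cycle_iff_cycle_edges:
  "is_cycle E \<longleftrightarrow> (\<exists>vs. 3 \<le> length vs \<and> distinct vs \<and> E = cycle_edges vs)"
  unfolding is_cycle_def cycle_edges_def by (simp add: setcompr_eq_image lessThan_def)

lemma cycle_edges_5:
  "cycle_edges [a, b, c, d, e] = {{a, b}, {b, c}, {c, d}, {d, e}, {e, a}}"
  by (simp add: cycle_edges_def lessThan_Suc insert_commute)

lemma cycle_edges_4:
  "cycle_edges [a, b, c, d] = {{a, b}, {b, c}, {c, d}, {d, a}}"
  by (simp add: cycle_edges_def lessThan_Suc insert_commute)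

locale cycle_list =
  fixes vs :: "'v list"
  assumes length_ge_3: "3 \<le> length vs" and distinct_vs: "distinct vs"
begin

definition nxt :: "nat \<Rightarrow> nat" where "nxt i = (if Suc i = length vs then 0 else Suc i)"
definition prv :: "nat \<Rightarrow> nat" where "prv i = (if i = 0 then length vs - 1 else i - 1)"

lemma nxt_less: "i < length vs \<Longrightarrow> nxt i < length vs"
  by (auto simp: nxt_def)

lemma prv_less: "i < length vs \<Longrightarrow> prv i < length vs"
  by (auto simp: prv_def)

lemma nxt_prv: "i < length vs \<Longrightarrow> nxt (prv i) = i"
  using length_ge_3 by (auto simp: nxt_def prv_def)

lemma prv_nxt: "i < length vs \<Longrightarrow> prv (nxt i) = i"
  using length_ge_3 by (auto simp: nxt_def prv_def)

lemma nxt_neq_prv: "i < length vs \<Longrightarrow> nxt i \<noteq> prv i"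
  using length_ge_3 by (auto simp: nxt_def prv_def)

lemma nth_eq_iff: "i < length vs \<Longrightarrow> j < length vs \<Longrightarrow> vs ! i = vs ! j \<longleftrightarrow> i = j"
  using distinct_vs by (simp add: nth_eq_iff_index_eq)

lemma cycle_edges_nxt: "cycle_edges vs = (\<lambda>i. {vs ! i, vs ! nxt i}) ` {..<length vs}"
  unfolding cycle_edges_def nxt_def by (intro image_cong) auto

lemma edge_nxt: "i < length vs \<Longrightarrow> {vs ! i, vs ! nxt i} \<in> cycle_edges vs"
  by (simp add: cycle_edges_nxt)

lemma edge_prv: "i < length vs \<Longrightarrow> {vs ! i, vs ! prv i} \<in> cycle_edges vs"
  using edge_nxt[OF prv_less] by (simp add: nxt_prv insert_commute)

lemma edge_cases:
  assumes "{x, y} \<in> cycle_edges vs"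
  obtains i where "i < length vs" "x = vs ! i" "y = vs ! nxt i \<or> y = vs ! prv i"
proof -
  from assms obtain j where j: "j < length vs" "{x, y} = {vs ! j, vs ! nxt j}"
    by (auto simp: cycle_edges_nxt)
  then consider "x = vs ! j" "y = vs ! nxt j" | "x = vs ! nxt j" "y = vs ! j"
    by (auto simp: doubleton_eq_iff)
  then show ?thesis
    using that j(1) nxt_less prv_nxt by cases metis+
qed

lemma vertex_in_set: "{x, y} \<in> cycle_edges vs \<Longrightarrow> x \<in> set vs"
  by (metis edge_cases nth_mem)

lemma vertex_has_edge: "x \<in> set vs \<Longrightarrow> \<exists>y. {x, y} \<in> cycle_edges vs"
  by (metis edge_nxt in_set_conv_nth)

lemma no_loop: "{x} \<notin> cycle_edges vs"
proof
  assume "{x} \<in> cycle_edges vs"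
  then obtain i where i: "i < length vs" "x = vs ! i" "x = vs ! nxt i \<or> x = vs ! prv i"
    using edge_cases[of x x] by auto
  then have "i = nxt i \<or> i = prv i"
    using nth_eq_iff nxt_less prv_less by metis
  then show False
    using i(1) length_ge_3 by (auto simp: nxt_def prv_def split: if_splits)
qed

lemma second_neighbour:
  assumes "{x, y} \<in> cycle_edges vs"
  shows "\<exists>z. z \<noteq> y \<and> {x, z} \<in> cycle_edges vs"
proof -
  obtain i where i: "i < length vs" "x = vs ! i" "y = vs ! nxt i \<or> y = vs ! prv i"
    using assms by (rule edge_cases)
  have "vs ! nxt i \<noteq> vs ! prv i"
    using i(1) nth_eq_iff nxt_less prv_less nxt_neq_prv by metis
  then show ?thesis
    using i edge_nxt edge_prv by metis
qed

lemma at_most_two_neighbours: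
  assumes "{x, y1} \<in> cycle_edges vs" "{x, y2} \<in> cycle_edges vs" "{x, y3} \<in> cycle_edges vs"
  shows "y1 = y2 \<or> y1 = y3 \<or> y2 = y3"
proof -
  have "\<exists>i < length vs. x = vs ! i \<and> (y = vs ! nxt i \<or> y = vs ! prv i)"
    if "{x, y} \<in> cycle_edges vs" for y
    using that by (rule edge_cases) blast
  then show ?thesis
    using assms nth_eq_iff by metis
qed

lemma card_edges: "card (cycle_edges vs) = length vs"
proof -
  have "inj_on (\<lambda>i. {vs ! i, vs ! nxt i}) {..<length vs}"
  proof (rule inj_onI)
    fix i j
    assume "i \<in> {..<length vs}" "j \<in> {..<length vs}" and eq: "{vs ! i, vs ! nxt i} = {vs ! j, vs ! nxt j}"
    then have ij: "i < length vs" "j < length vs" by auto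
    from eq consider "vs ! i = vs ! j" | "vs ! i = vs ! nxt j" "vs ! nxt i = vs ! j"
      by (auto simp: doubleton_eq_iff)
    then show "i = j"
    proof cases
      case 1
      then show ?thesis using nth_eq_iff ij by blast
    next
      case 2
      then have "i = nxt j" "nxt i = j" using nth_eq_iff ij nxt_less by blast+
      then show ?thesis using length_ge_3 ij by (auto simp: nxt_def split: if_splits)
    qed
  qed
  then show ?thesis by (simp add: cycle_edges_nxt card_image)
qed

lemma neighbour_closed_superset:
  assumes closed: "\<And>x y. x \<in> X \<Longrightarrow> {x, y} \<in> cycle_edges vs \<Longrightarrow> y \<in> X"
    and "x \<in> X" "x \<in> set vs"
  shows "set vs \<subseteq> X"
proof -
  define I where "I = {i. i < length vs \<and> vs ! i \<in> X}"
  have nxt_I: "nxt i \<in> I" if "i \<in> I" for i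
    using that closed edge_nxt nxt_less unfolding I_def by auto
  have prv_I: "prv i \<in> I" if "i \<in> I" for i
    using that closed edge_prv prv_less unfolding I_def by auto
  have "0 \<in> I" if "i \<in> I" for i
    using that
  proof (induction i)
    case (Suc i)
    then show ?case using prv_I[OF Suc.prems] by (simp add: prv_def)
  qed
  moreover obtain i where "i \<in> I"
    using assms(2,3) unfolding I_def by (metis in_set_conv_nth mem_Collect_eq)
  ultimately have "0 \<in> I" by blast
  then have "m \<in> I" if "m < length vs" for m
    using that
  proof (induction m)
    case (Suc m)
    then show ?case using nxt_I[of m] by (simp add: nxt_def split: if_splits)
  qed
  then show ?thesis
    unfolding I_def by (auto simp: in_set_conv_nth)
qed

end

lemma cycle_listE:
  assumes "is_cycle E"
  obtains vs where "cycle_list vs" "E = cycle_edges vs"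
  using assms unfolding is_cycle_iff_cycle_edges cycle_list_def by blast

lemma is_cycle_cycle_edges: "3 \<le> length vs \<Longrightarrow> distinct vs \<Longrightarrow> is_cycle (cycle_edges vs)"
  unfolding is_cycle_iff_cycle_edges by blast

lemma card_cycle_edges: "3 \<le> length vs \<Longrightarrow> distinct vs \<Longrightarrow> card (cycle_edges vs) = length vs"
  by (simp add: cycle_list.card_edges cycle_list_def)

lemma cycle_no_loop: "is_cycle E \<Longrightarrow> {x} \<notin> E"
  by (metis cycle_listE cycle_list.no_loop)

lemma cycle_second_neighbour: "is_cycle E \<Longrightarrow> {x, y} \<in> E \<Longrightarrow> \<exists>z. z \<noteq> y \<and> {x, z} \<in> E"
  by (metis cycle_listE cycle_list.second_neighbour)

lemma cycle_at_most_two_neighbours: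
  "is_cycle E \<Longrightarrow> {x, y1} \<in> E \<Longrightarrow> {x, y2} \<in> E \<Longrightarrow> {x, y3} \<in> E \<Longrightarrow> y1 = y2 \<or> y1 = y3 \<or> y2 = y3"
  by (metis cycle_listE cycle_list.at_most_two_neighbours)


lemma cycle_subcycle_eq:
  assumes E: "is_cycle E" and F: "is_cycle F" and "F \<subseteq> E"
  shows "F = E"
proof -
  obtain vs where "cycle_list vs" and E_def: "E = cycle_edges vs"
    using E by (rule cycle_listE)
  interpret vs: cycle_list vs by fact
  obtain ws where "cycle_list ws" and F_def: "F = cycle_edges ws"
    using F by (rule cycle_listE)
  interpret ws: cycle_list ws by fact
  have ws_vs: "set ws \<subseteq> set vs"
  proof
    fix x
    assume "x \<in> set ws"
    then obtain y where "{x, y} \<in> F"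
      unfolding F_def by (auto dest: ws.vertex_has_edge)
    with \<open>F \<subseteq> E\<close> have "{x, y} \<in> cycle_edges vs"
      unfolding E_def by (rule subsetD)
    then show "x \<in> set vs"
      by (rule vs.vertex_in_set)
  qed
  have closed: "y \<in> set ws" if "x \<in> set ws" "{x, y} \<in> cycle_edges vs" for x y
  proof -
    from that(1) obtain i where i: "i < length ws" "x = ws ! i"
      by (auto simp: in_set_conv_nth)
    let ?a = "ws ! ws.nxt i" and ?b = "ws ! ws.prv i"
    have "{x, ?a} \<in> E" "{x, ?b} \<in> E"
      using ws.edge_nxt[OF i(1)] ws.edge_prv[OF i(1)] \<open>F \<subseteq> E\<close> unfolding F_def i(2) by auto
    then have "y = ?a \<or> y = ?b \<or> ?a = ?b"
      using cycle_at_most_two_neighbours[OF E] that(2) unfolding E_def by blast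
    moreover have "?a \<noteq> ?b"
      using ws.nxt_neq_prv[OF i(1)] ws.nth_eq_iff[OF ws.nxt_less[OF i(1)] ws.prv_less[OF i(1)]] by simp
    moreover have "?a \<in> set ws" "?b \<in> set ws"
      using ws.nxt_less[OF i(1)] ws.prv_less[OF i(1)] by simp_all
    ultimately show ?thesis
      by blast
  qed
  have "set vs \<subseteq> set ws"
  proof (rule vs.neighbour_closed_superset)
    show "y \<in> set ws" if "x \<in> set ws" "{x, y} \<in> cycle_edges vs" for x y
      using that by (rule closed)
    show "ws ! 0 \<in> set ws"
      using ws.length_ge_3 by (intro nth_mem) linarith
    then show "ws ! 0 \<in> set vs"
      using ws_vs by blast
  qed
  with ws_vs have "length vs = length ws"
    using distinct_card[OF vs.distinct_vs] distinct_card[OF ws.distinct_vs] by simp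
  then have "card E = card F"
    unfolding E_def F_def by (simp add: vs.card_edges ws.card_edges)
  moreover have "finite E"
    unfolding E_def cycle_edges_def by simp
  ultimately show ?thesis
    using \<open>F \<subseteq> E\<close> by (simp add: card_subset_eq)
qed

lemma family_colour_class:
  assumes "family_of_cycles D" "(E, c) \<in> set D"
  shows "(e, c) \<in> family_edges D \<longleftrightarrow> e \<in> E"
proof -
  have inj: "inj_on snd (set D)"
    using assms(1) by (simp add: family_of_cycles_def distinct_map)
  have unique: "E' = E" if "(E', c) \<in> set D" for E'
    using inj_onD[OF inj _ that assms(2)] by simp
  show ?thesis
    unfolding family_edges_def using unique assms(2) by blast
qed

lemma family_colour_classE:
  assumes "family_of_cycles D" "(e, c) \<in> family_edges D"
  obtains E where "is_cycle E" "\<And>e'. (e', c) \<in> family_edges D \<longleftrightarrow> e' \<in> E"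
proof -
  obtain E where E: "(E, c) \<in> set D"
    using assms(2) by (auto simp: family_edges_def)
  moreover have "is_cycle E"
    using assms(1) E by (auto simp: family_of_cycles_def)
  ultimately show ?thesis
    using that family_colour_class[OF assms(1)] by blast
qed

lemma cycle_nonempty: "is_cycle E \<Longrightarrow> E \<noteq> {}"
proof (elim cycle_listE)
  fix vs
  assume vs: "cycle_list vs" and "E = cycle_edges vs"
  moreover have "0 < length vs"
    using cycle_list.length_ge_3[OF vs] by linarith
  ultimately show "E \<noteq> {}"
    using cycle_list.edge_nxt[OF vs] by blast
qed

lemma monochromatic_cycle_even:
  assumes "family_of_even_cycles D" "is_cycle F" "\<And>e. e \<in> F \<Longrightarrow> (e, c) \<in> family_edges D"
  shows "even (card F)"
proof -
  obtain e where "e \<in> F"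
    using cycle_nonempty[OF assms(2)] by blast
  then obtain E where E: "(E, c) \<in> set D"
    using assms(3) by (auto simp: family_edges_def)
  then have E_even: "even_cycle E"
    using assms(1) by (auto simp: family_of_even_cycles_def)
  have "F \<subseteq> E"
    using assms(1,3) family_colour_class[OF _ E] by (auto simp: family_of_even_cycles_def)
  moreover have "is_cycle E"
    using E_even by (simp add: even_cycle_def)
  ultimately have "F = E"
    using assms(2) by (intro cycle_subcycle_eq)
  then show ?thesis
    using E_even by (simp add: even_cycle_def)
qed

lemma rainbow_square:
  assumes "distinct [x1, x2, x3, x4]" "distinct [c1, c2, c3, c4]"
    and "({x1, x2}, c1) \<in> family_edges D" "({x2, x3}, c2) \<in> family_edges D"
      "({x3, x4}, c3) \<in> family_edges D" "({x4, x1}, c4) \<in> family_edges D"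
  shows "has_rainbow_even_cycle D"
proof -
  define G where "G = {({x1, x2}, c1), ({x2, x3}, c2), ({x3, x4}, c3), ({x4, x1}, c4)}"
  have edges: "fst ` G = cycle_edges [x1, x2, x3, x4]"
    by (simp add: G_def cycle_edges_4)
  have "is_cycle (fst ` G)" and card_fst: "card (fst ` G) = 4"
    unfolding edges using assms(1) by (simp_all add: is_cycle_cycle_edges card_cycle_edges)
  have card_G: "card G = 4" and card_snd: "card (snd ` G) = 4"
    using assms(2) by (simp_all add: G_def)
  have "finite G" "\<forall>(e, a) \<in> G. card e = 2"
    using assms(1) by (auto simp: G_def)
  then have "colored_graph G"
    using card_fst card_G by (simp add: colored_graph_def inj_on_iff_eq_card)
  moreover have "even_cycle (fst ` G)"
    using \<open>is_cycle (fst ` G)\<close> card_fst by (simp add: even_cycle_def)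
  moreover have "rainbow G"
    using card_G card_snd by (simp add: rainbow_def)
  moreover have "family_contains D G"
    using assms(3-6) by (simp add: family_contains_def G_def)
  ultimately show ?thesis
    unfolding has_rainbow_even_cycle_def by blast
qed

lemma mod_add_right_cancel_nat: "((m::nat) + i) mod k = (n + i) mod k \<longleftrightarrow> m mod k = n mod k"
proof
  assume "(m + i) mod k = (n + i) mod k"
  then have "((m + i) mod k + (k - 1) * i) mod k = ((n + i) mod k + (k - 1) * i) mod k"
    by simp
  then have "(m + (i + (k - 1) * i)) mod k = (n + (i + (k - 1) * i)) mod k"
    by (simp add: mod_add_left_eq add.assoc)
  moreover have "i + (k - 1) * i = k * i" if "k > 0"
    using that by (cases k) simp_all
  ultimately show "m mod k = n mod k"
    by (cases "k = 0") simp_all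
next
  assume "m mod k = n mod k"
  then show "(m + i) mod k = (n + i) mod k"
    by (metis mod_add_left_eq)
qed

lemma less_5_cases: "(d::nat) < 5 \<Longrightarrow> d = 0 \<or> d = 1 \<or> d = 2 \<or> d = 3 \<or> d = 4"
  by auto

lemma all_less_5: "(\<forall>i<5::nat. P i) \<longleftrightarrow> P 0 \<and> P 1 \<and> P 2 \<and> P 3 \<and> P 4"
  using less_5_cases by auto

locale rainbow_pentagon =
  fixes D :: "('v set set \<times> 'c) list" and v :: "nat \<Rightarrow> 'v" and \<alpha> :: "nat \<Rightarrow> 'c"
  assumes even_family: "family_of_even_cycles D"
    and no_rainbow: "\<not> has_rainbow_even_cycle D"
    and v_eq_iff: "v i = v j \<longleftrightarrow> i mod 5 = j mod 5"
    and \<alpha>_eq_iff: "\<alpha> i = \<alpha> j \<longleftrightarrow> i mod 5 = j mod 5"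
    and pentagon_edge: "({v i, v (i + 1)}, \<alpha> i) \<in> family_edges D"
begin

(* Keep 1 a numeral, so that computed indices such as 6 - 5 and literal indices agree. *)
declare One_nat_def [simp del] One_nat_def [symmetric, simp]

abbreviation adj :: "'v \<Rightarrow> 'v \<Rightarrow> 'c \<Rightarrow> bool" where
  "adj x y c \<equiv> ({x, y}, c) \<in> family_edges D"

lemma adj_sym: "adj x y c \<Longrightarrow> adj y x c"
  by (simp add: insert_commute)

lemma adj_irrefl: "\<not> adj x x c"
  using even_family cycle_no_loop
  by (metis family_colour_classE family_of_even_cycles_def insert_absorb2)

lemma adj_second_neighbour: "adj x y c \<Longrightarrow> \<exists>z. z \<noteq> y \<and> adj x z c"
  using even_family cycle_second_neighbour
  by (metis family_colour_classE family_of_even_cycles_def)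

lemma adj_at_most_two: "adj x y1 c \<Longrightarrow> adj x y2 c \<Longrightarrow> adj x y3 c \<Longrightarrow> y1 = y2 \<or> y1 = y3 \<or> y2 = y3"
  using even_family cycle_at_most_two_neighbours
  by (metis family_colour_classE family_of_even_cycles_def)

lemma no_monochromatic_pentagon:
  assumes "distinct [x0, x1, x2, x3, x4]"
    and "adj x0 x1 c" "adj x1 x2 c" "adj x2 x3 c" "adj x3 x4 c" "adj x4 x0 c"
  shows False
proof -
  have "is_cycle (cycle_edges [x0, x1, x2, x3, x4])"
    using assms(1) by (simp add: is_cycle_cycle_edges)
  then have "even (card (cycle_edges [x0, x1, x2, x3, x4]))"
    by (rule monochromatic_cycle_even[OF even_family]) (use assms(2-6) in \<open>auto simp: cycle_edges_5\<close>)
  then show False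
    using assms(1) by (simp add: card_cycle_edges)
qed

lemma no_rainbow_square:
  "distinct [x1, x2, x3, x4] \<Longrightarrow> distinct [c1, c2, c3, c4]
   \<Longrightarrow> adj x1 x2 c1 \<Longrightarrow> adj x2 x3 c2 \<Longrightarrow> adj x3 x4 c3 \<Longrightarrow> adj x4 x1 c4 \<Longrightarrow> False"
  using rainbow_square no_rainbow by metis

lemma v_minus_5 [simp]: "5 \<le> m \<Longrightarrow> v m = v (m - 5)"
  by (simp add: v_eq_iff le_mod_geq)

lemma \<alpha>_minus_5 [simp]: "5 \<le> m \<Longrightarrow> \<alpha> m = \<alpha> (m - 5)"
  by (simp add: \<alpha>_eq_iff le_mod_geq)

lemma range_v_cases: "w \<in> range v \<Longrightarrow> w = v 0 \<or> w = v 1 \<or> w = v 2 \<or> w = v 3 \<or> w = v 4"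
proof (elim rangeE)
  fix m
  assume "w = v m"
  then show ?thesis
    using less_5_cases[of "m mod 5"] by (simp add: v_eq_iff)
qed

(* Facts proved at index 0 transfer to every index through this rotation. *)
lemma rainbow_pentagon_rotate: "rainbow_pentagon D (\<lambda>n. v (n + i)) (\<lambda>n. \<alpha> (n + i))"
proof
  show "family_of_even_cycles D" by (rule even_family)
  show "\<not> has_rainbow_even_cycle D" by (rule no_rainbow)
  show "v (m + i) = v (n + i) \<longleftrightarrow> m mod 5 = n mod 5" for m n
    by (simp add: v_eq_iff mod_add_right_cancel_nat)
  show "\<alpha> (m + i) = \<alpha> (n + i) \<longleftrightarrow> m mod 5 = n mod 5" for m n
    by (simp add: \<alpha>_eq_iff mod_add_right_cancel_nat)
  show "({v (n + i), v (n + 1 + i)}, \<alpha> (n + i)) \<in> family_edges D" for n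
    using pentagon_edge[of "n + i"] by (simp add: ac_simps)
qed

definition shift_in_family :: "nat \<Rightarrow> bool" where
  "shift_in_family j \<longleftrightarrow> (\<forall>i. adj (v i) (v (i + 1)) (\<alpha> (i + j)))"

(* Index k + j + 4 stands for k + j - 1 modulo 5. *)
definition trapped :: "nat \<Rightarrow> bool" where
  "trapped j \<longleftrightarrow> (\<forall>k w. adj (v k) w (\<alpha> (k + j + 4)) \<or> adj (v k) w (\<alpha> (k + j)) \<longrightarrow> w \<in> range v)"

lemma range_rotate: "range (\<lambda>n. v (n + i)) = range v"
proof
  show "range v \<subseteq> range (\<lambda>n. v (n + i))"
  proof
    fix w assume "w \<in> range v"
    then obtain m where "w = v m" by blast
    moreover have "v m = v (m + 4 * i + i)"
      by (simp add: v_eq_iff)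
    ultimately show "w \<in> range (\<lambda>n. v (n + i))" by blast
  qed
qed blast

lemma trapped_rotate:
  assumes "trapped j"
  shows "rainbow_pentagon.trapped D (\<lambda>n. v (n + i)) (\<lambda>n. \<alpha> (n + i)) j"
  unfolding rainbow_pentagon.trapped_def[OF rainbow_pentagon_rotate] range_rotate
proof (intro allI impI)
  fix k w
  assume "adj (v (k + i)) w (\<alpha> (k + j + 4 + i)) \<or> adj (v (k + i)) w (\<alpha> (k + j + i))"
  then show "w \<in> range v"
    using assms[unfolded trapped_def, rule_format, of "k + i" w] by (simp add: ac_simps)
qed

lemma trapped_neighbour:
  assumes "trapped j"
  shows "adj (v k) w (\<alpha> (k + j)) \<Longrightarrow> w \<in> range v" "adj (v k) w (\<alpha> (k + j + 4)) \<Longrightarrow> w \<in> range v"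
  using assms unfolding trapped_def by blast+

lemma trapped_colour_class:
  assumes "trapped 0"
  shows "adj (v 4) (v 0) (\<alpha> 0) \<or> adj (v 3) (v 0) (\<alpha> 0)"
    and "adj (v 1) (v 2) (\<alpha> 0) \<or> adj (v 1) (v 3) (\<alpha> 0)"
proof -
  have short_chord: "\<not> adj (v 0) (v 2) (\<alpha> 0)"
    using no_rainbow_square[of "v 2" "v 3" "v 4" "v 0" "\<alpha> 2" "\<alpha> 3" "\<alpha> 4" "\<alpha> 0"]
      pentagon_edge[of 2] pentagon_edge[of 3] pentagon_edge[of 4]
    by (auto simp: v_eq_iff \<alpha>_eq_iff)
  have long_chord: "\<not> adj (v 4) (v 1) (\<alpha> 0)"
    using no_rainbow_square[of "v 1" "v 2" "v 3" "v 4" "\<alpha> 1" "\<alpha> 2" "\<alpha> 3" "\<alpha> 0"]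
      pentagon_edge[of 1] pentagon_edge[of 2] pentagon_edge[of 3]
    by (auto simp: v_eq_iff \<alpha>_eq_iff)
  have edge_0: "adj (v 0) (v 1) (\<alpha> 0)" "adj (v 1) (v 0) (\<alpha> 0)"
    using pentagon_edge[of 0] by (simp_all add: insert_commute)
  obtain z where z: "z \<noteq> v 1" "adj (v 0) z (\<alpha> 0)"
    using adj_second_neighbour[OF edge_0(1)] by blast
  have "z \<in> range v"
    using trapped_neighbour(1)[OF assms, of 0 z] z(2) by simp
  moreover have "z \<noteq> v 0" "z \<noteq> v 2"
    using z(2) adj_irrefl short_chord by blast+
  ultimately have "z = v 3 \<or> z = v 4"
    using range_v_cases z(1) by blast
  then show "adj (v 4) (v 0) (\<alpha> 0) \<or> adj (v 3) (v 0) (\<alpha> 0)"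
    using z(2) adj_sym by blast
  obtain y where y: "y \<noteq> v 0" "adj (v 1) y (\<alpha> 0)"
    using adj_second_neighbour[OF edge_0(2)] by blast
  have "y \<in> range v"
    using trapped_neighbour(2)[OF assms, of 1 y] y(2) by simp
  moreover have "y \<noteq> v 1" "y \<noteq> v 4"
    using y(2) adj_irrefl long_chord adj_sym by blast+
  ultimately have "y = v 2 \<or> y = v 3"
    using range_v_cases y(1) by blast
  then show "adj (v 1) (v 2) (\<alpha> 0) \<or> adj (v 1) (v 3) (\<alpha> 0)"
    using y(2) by blast
qed

lemma square_exclusions:
  shows "adj (v 1) (v 3) (\<alpha> 0) \<Longrightarrow> \<not> adj (v 0) (v 1) (\<alpha> 1)"
    and "adj (v 3) (v 0) (\<alpha> 0) \<Longrightarrow> \<not> adj (v 0) (v 1) (\<alpha> 4)"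
    and "\<not> (adj (v 1) (v 3) (\<alpha> 0) \<and> adj (v 3) (v 4) (\<alpha> 2) \<and> adj (v 4) (v 0) (\<alpha> 3) \<and> adj (v 0) (v 1) (\<alpha> 4))"
    and "\<not> (adj (v 1) (v 3) (\<alpha> 0) \<and> adj (v 4) (v 1) (\<alpha> 1) \<and> adj (v 3) (v 0) (\<alpha> 2))"
proof -
  have edges: "adj (v 1) (v 2) (\<alpha> 1)" "adj (v 2) (v 3) (\<alpha> 2)" "adj (v 3) (v 4) (\<alpha> 3)"
    "adj (v 4) (v 0) (\<alpha> 4)" "adj (v 0) (v 4) (\<alpha> 4)"
    using pentagon_edge[of 1] pentagon_edge[of 2] pentagon_edge[of 3] pentagon_edge[of 4]
    by (simp_all add: insert_commute)
  have distinct: "distinct [v 1, v 3, v 4, v 0]" "distinct [v 3, v 0, v 1, v 2]" "distinct [v 1, v 3, v 0, v 4]"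
    "distinct [\<alpha> 0, \<alpha> 3, \<alpha> 4, \<alpha> 1]" "distinct [\<alpha> 0, \<alpha> 4, \<alpha> 1, \<alpha> 2]"
    "distinct [\<alpha> 0, \<alpha> 2, \<alpha> 3, \<alpha> 4]" "distinct [\<alpha> 0, \<alpha> 2, \<alpha> 4, \<alpha> 1]"
    by (simp_all add: v_eq_iff \<alpha>_eq_iff)
  show "adj (v 1) (v 3) (\<alpha> 0) \<Longrightarrow> \<not> adj (v 0) (v 1) (\<alpha> 1)"
    using no_rainbow_square[OF distinct(1,4)] edges by blast
  show "adj (v 3) (v 0) (\<alpha> 0) \<Longrightarrow> \<not> adj (v 0) (v 1) (\<alpha> 4)"
    using no_rainbow_square[OF distinct(2,5)] edges by blast
  show "\<not> (adj (v 1) (v 3) (\<alpha> 0) \<and> adj (v 3) (v 4) (\<alpha> 2) \<and> adj (v 4) (v 0) (\<alpha> 3) \<and> adj (v 0) (v 1) (\<alpha> 4))"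
    using no_rainbow_square[OF distinct(1,6)] by blast
  show "\<not> (adj (v 1) (v 3) (\<alpha> 0) \<and> adj (v 4) (v 1) (\<alpha> 1) \<and> adj (v 3) (v 0) (\<alpha> 2))"
    using no_rainbow_square[OF distinct(3,7)] edges by blast
qed

lemma shift_in_family_iff:
  "shift_in_family j \<longleftrightarrow> adj (v 0) (v 1) (\<alpha> j) \<and> adj (v 1) (v 2) (\<alpha> (1 + j)) \<and> adj (v 2) (v 3) (\<alpha> (2 + j))
     \<and> adj (v 3) (v 4) (\<alpha> (3 + j)) \<and> adj (v 4) (v 0) (\<alpha> (4 + j))"
proof -
  have "v (i mod 5) = v i" "v (i mod 5 + 1) = v (i + 1)" "\<alpha> (i mod 5 + j) = \<alpha> (i + j)" for i
    by (simp_all add: v_eq_iff \<alpha>_eq_iff mod_add_left_eq)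
  then have "shift_in_family j \<longleftrightarrow> (\<forall>i<5. adj (v i) (v (i + 1)) (\<alpha> (i + j)))"
    unfolding shift_in_family_def by (metis mod_less_divisor zero_less_numeral)
  then show ?thesis
    unfolding all_less_5 by simp
qed

(* In colour \<alpha>_i write P_i, A_i for the edges v_(i-1) v_i and v_(i-2) v_i, and Q_i, B_i for
   v_(i+1) v_(i+2) and v_(i+1) v_(i+3). The rotated facts give P_i \<or> A_i, Q_i \<or> B_i and the
   square exclusions. Then B_i forces \<not> P_(i+1), hence A_(i+1), hence \<not> B_(i+2). So B_i would
   give Q_(i+2) and Q_(i+3), hence B_(i+4), hence Q_(i+1); but B_(i+4) together with Q_(i+1),
   Q_(i+2), Q_(i+3) is excluded. Thus all Q_i hold, every A_i fails, and all P_i hold: these are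
   the pentagons shifted by 4 and by 1. *)
lemma trapped_0_imp_shifts_1_4:
  assumes "trapped 0"
  shows "shift_in_family 1 \<and> shift_in_family 4"
proof -
  note colour = rainbow_pentagon.trapped_colour_class[OF rainbow_pentagon_rotate trapped_rotate[OF assms]]
  note squares = rainbow_pentagon.square_exclusions[OF rainbow_pentagon_rotate]
  have "(adj (v 4) (v 0) (\<alpha> 0) \<and> adj (v 0) (v 1) (\<alpha> 1) \<and> adj (v 1) (v 2) (\<alpha> 2) \<and> adj (v 2) (v 3) (\<alpha> 3)
      \<and> adj (v 3) (v 4) (\<alpha> 4))
    \<and> (adj (v 1) (v 2) (\<alpha> 0) \<and> adj (v 2) (v 3) (\<alpha> 1) \<and> adj (v 3) (v 4) (\<alpha> 2) \<and> adj (v 4) (v 0) (\<alpha> 3)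
      \<and> adj (v 0) (v 1) (\<alpha> 4))"
    using colour[of 0, simplified] colour[of 1, simplified] colour[of 2, simplified]
      colour[of 3, simplified] colour[of 4, simplified]
      squares[of 0, simplified] squares[of 1, simplified] squares[of 2, simplified]
      squares[of 3, simplified] squares[of 4, simplified]
    by sat
  then show ?thesis
    unfolding shift_in_family_iff by simp
qed

lemma shifts_1_4_not_both_trapped:
  assumes "shift_in_family 1" "shift_in_family 4" "trapped 1" "trapped 4"
  shows False
proof -
  have p01: "adj (v 0) (v 1) (\<alpha> 1)" and q12: "adj (v 1) (v 2) (\<alpha> 0)"
    and q23: "adj (v 2) (v 3) (\<alpha> 1)" and q01: "adj (v 0) (v 1) (\<alpha> 4)"
    using assms(1,2) unfolding shift_in_family_iff by simp_all
  have e12: "adj (v 1) (v 2) (\<alpha> 1)" and e23: "adj (v 2) (v 3) (\<alpha> 2)"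
    and e34: "adj (v 3) (v 4) (\<alpha> 3)" and e40: "adj (v 4) (v 0) (\<alpha> 4)"
    using pentagon_edge[of 1] pentagon_edge[of 2] pentagon_edge[of 3] pentagon_edge[of 4] by simp_all
  have distinct: "distinct [v 0, v 2, v 3, v 4]" "distinct [\<alpha> 1, \<alpha> 2, \<alpha> 3, \<alpha> 4]"
    "distinct [v 3, v 0, v 1, v 2]" "distinct [\<alpha> 1, \<alpha> 4, \<alpha> 0, \<alpha> 2]"
    "distinct [v 0, v 1, v 2, v 3, v 4]"
    by (simp_all add: v_eq_iff \<alpha>_eq_iff)
  obtain z where z: "z \<noteq> v 1" "adj (v 0) z (\<alpha> 1)"
    using adj_second_neighbour[OF p01] by blast
  have "z \<in> range v"
    using trapped_neighbour(1)[OF assms(3), of 0 z] z(2) by simp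
  moreover have "z \<noteq> v 0"
    using z(2) adj_irrefl by blast
  moreover have "z \<noteq> v 2"
    using z(2) no_rainbow_square[OF distinct(1,2) _ e23 e34 e40] by blast
  ultimately have z_cases: "z = v 3 \<or> z = v 4"
    using range_v_cases z(1) by blast
  obtain y where y: "y \<noteq> v 2" "adj (v 3) y (\<alpha> 1)"
    using adj_second_neighbour[OF adj_sym[OF q23]] by blast
  have "y \<in> range v"
    using trapped_neighbour(2)[OF assms(4), of 3 y] y(2) by simp
  moreover have "y \<noteq> v 3"
    using y(2) adj_irrefl by blast
  moreover have "y \<noteq> v 1"
  proof
    assume "y = v 1"
    then have "adj (v 1) (v 3) (\<alpha> 1)"
      using y(2) by (simp add: insert_commute)
    then have "v 0 = v 2 \<or> v 0 = v 3 \<or> v 2 = v 3"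
      by (rule adj_at_most_two[OF adj_sym[OF p01] e12])
    then show False
      by (simp add: v_eq_iff)
  qed
  ultimately have y_cases: "y = v 0 \<or> y = v 4"
    using range_v_cases y(1) by blast
  show False
  proof (cases "adj (v 3) (v 0) (\<alpha> 1)")
    case True
    show False
      by (rule no_rainbow_square[OF distinct(3,4) True q01 q12 e23])
  next
    case False
    have "z \<noteq> v 3"
    proof
      assume "z = v 3"
      then have "adj (v 3) (v 0) (\<alpha> 1)"
        using z(2) by (simp add: insert_commute)
      with False show False by contradiction
    qed
    moreover have "y \<noteq> v 0"
      using False y(2) by blast
    ultimately have "z = v 4" "y = v 4"
      using z_cases y_cases by blast+
    then have "adj (v 4) (v 0) (\<alpha> 1)" "adj (v 3) (v 4) (\<alpha> 1)"
      using z(2) y(2) by (simp_all add: insert_commute)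
    then show False
      using no_monochromatic_pentagon[OF distinct(5) p01 e12 q23] by blast
  qed
qed

theorem escaping_shift_exists:
  "\<exists>j. shift_in_family j \<and> \<not> trapped j"
proof (rule ccontr)
  assume "\<not> ?thesis"
  then have trapped: "trapped j" if "shift_in_family j" for j
    using that by blast
  have "shift_in_family 0"
    by (simp add: shift_in_family_def pentagon_edge)
  then have "shift_in_family 1" "shift_in_family 4"
    using trapped_0_imp_shifts_1_4 trapped by blast+
  then show False
    using shifts_1_4_not_both_trapped trapped by blast
qed


theorem escaping_shift_exists_below_5:
  "\<exists>j < 5. \<exists>w. w \<notin> v ` {..<5} \<and> (\<exists>k < 5.
     (\<forall>i < 5. adj (v i) (v ((i + 1) mod 5)) (\<alpha> ((i + j) mod 5))) \<and>
     (adj w (v k) (\<alpha> ((k + j + 4) mod 5)) \<or> adj w (v k) (\<alpha> ((k + j) mod 5))))"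
proof -
  obtain j where j: "shift_in_family j" "\<not> trapped j"
    using escaping_shift_exists by blast
  then obtain k w where w: "w \<notin> range v" "adj (v k) w (\<alpha> (k + j + 4)) \<or> adj (v k) w (\<alpha> (k + j))"
    unfolding trapped_def by blast
  have "range v \<subseteq> v ` {..<5}"
    using range_v_cases by fastforce
  then have "w \<notin> v ` {..<5}"
    using w(1) by blast
  moreover have "adj (v i) (v ((i + 1) mod 5)) (\<alpha> ((i + j mod 5) mod 5))" for i
  proof -
    have "v ((i + 1) mod 5) = v (i + 1)" "\<alpha> ((i + j mod 5) mod 5) = \<alpha> (i + j)"
      by (simp_all add: v_eq_iff \<alpha>_eq_iff mod_add_right_eq)
    then show ?thesis
      using j(1) unfolding shift_in_family_def by simp
  qed
  moreover have "adj w (v (k mod 5)) (\<alpha> ((k mod 5 + j mod 5 + 4) mod 5)) \<or>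
      adj w (v (k mod 5)) (\<alpha> ((k mod 5 + j mod 5) mod 5))"
  proof -
    have "v (k mod 5) = v k" "\<alpha> ((k mod 5 + j mod 5 + 4) mod 5) = \<alpha> (k + j + 4)"
      "\<alpha> ((k mod 5 + j mod 5) mod 5) = \<alpha> (k + j)"
      by (simp_all add: v_eq_iff \<alpha>_eq_iff) (metis mod_add_eq mod_add_left_eq)+
    then show ?thesis
      using w(2) by (simp add: insert_commute)
  qed
  ultimately show ?thesis
    by (intro exI[of _ "j mod 5"] conjI exI[of _ w] exI[of _ "k mod 5"]) auto
qed
end

lemma rainbow_pentagon_mod_5:
  assumes "family_of_even_cycles D" "\<not> has_rainbow_even_cycle D" "inj_on v {..<5}" "inj_on \<alpha> {..<5}"
    and "family_contains D {({v i, v ((i + 1) mod 5)}, \<alpha> i) | i. i < 5}"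
  shows "rainbow_pentagon D (\<lambda>i. v (i mod 5)) (\<lambda>i. \<alpha> (i mod 5))"
proof
  show "v (i mod 5) = v (j mod 5) \<longleftrightarrow> i mod 5 = j mod 5" for i j
    using inj_on_eq_iff[OF assms(3)] by simp
  show "\<alpha> (i mod 5) = \<alpha> (j mod 5) \<longleftrightarrow> i mod 5 = j mod 5" for i j
    using inj_on_eq_iff[OF assms(4)] by simp
  show "({v (i mod 5), v ((i + 1) mod 5)}, \<alpha> (i mod 5)) \<in> family_edges D" for i
  proof -
    have "({v (i mod 5), v ((i mod 5 + 1) mod 5)}, \<alpha> (i mod 5))
        \<in> {({v i, v ((i + 1) mod 5)}, \<alpha> i) | i. i < 5}"
      by auto
    then show ?thesis
      using assms(5) unfolding family_contains_def by (auto simp: mod_simps)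
  qed
qed (use assms(1,2) in auto)

theorem lemma3p6:
  fixes D :: "('v set set \<times> 'c) list"
    and v :: "nat \<Rightarrow> 'v" and \<alpha> :: "nat \<Rightarrow> 'c"
  assumes "family_of_even_cycles D"
    and "\<not> has_rainbow_even_cycle D"
    and "inj_on v {..<5}"
    and "inj_on \<alpha> {..<5}"
    and "family_contains D {({v i, v ((i + 1) mod 5)}, \<alpha> i) | i. i < 5}"
  shows "\<exists>j < 5. \<exists>w. w \<notin> v ` {..<5} \<and> (\<exists>k < 5.
           family_contains D {({v i, v ((i + 1) mod 5)}, \<alpha> ((i + j) mod 5)) | i. i < 5} \<and>
           (({w, v k}, \<alpha> ((k + j + 4) mod 5)) \<in> family_edges D \<or>
            ({w, v k}, \<alpha> ((k + j) mod 5)) \<in> family_edges D))"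
proof -
  interpret rainbow_pentagon D "\<lambda>i. v (i mod 5)" "\<lambda>i. \<alpha> (i mod 5)"
    using rainbow_pentagon_mod_5[OF assms] .
  have image: "(\<lambda>i. v (i mod 5)) ` {..<5} = v ` {..<5}"
    by (intro image_cong) auto
  from escaping_shift_exists_below_5 obtain j w k where "j < 5" "k < 5" "w \<notin> v ` {..<5}"
    "\<forall>i < 5. ({v i, v ((i + 1) mod 5)}, \<alpha> ((i + j) mod 5)) \<in> family_edges D"
    "({w, v k}, \<alpha> ((k + j + 4) mod 5)) \<in> family_edges D \<or> ({w, v k}, \<alpha> ((k + j) mod 5)) \<in> family_edges D"
    unfolding image by auto
  then show ?thesis
    unfolding family_contains_def by blast
qed

end
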